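(* For $b\in[0,1]$ and an integer $n\ge1$ define $b_n=\max\big(b,\tfrac{1}{n}\lceil (n-1)b\rceil\big)$. Then: (1) $b=b_n$ if and only if $\{nb\}\le b$; (2) $b\le b_n\le b+\tfrac1n$; (3) $\lfloor b\rfloor+\lceil (n-1)b_{n-1}\rceil\le nb_n$ for $n\ge1$.
   Context: $\{x\}=x-\lfloor x\rfloor$ denotes the fractional part of a real number $x$. *)

theory Defs
  imports Complex_Main
begin

definition bn :: "real \<Rightarrow> nat \<Rightarrow> real" where
  "bn b n = max b (of_int \<lceil>(real n - 1) * b\<rceil> / real n)"

end

theory Submission
  imports Defs
begin

text \<open>
  Multiplied by \<open>n\<close>, the definition reads \<open>n b\<^sub>n = max (n b) \<lceil>(n - 1) b\<rceil>\<close>, so everything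
  reduces to comparing \<open>\<lceil>(n - 1) b\<rceil>\<close> with \<open>n b\<close>. Writing \<open>n b = \<lfloor>n b\<rfloor> + {n b}\<close>, the
  inequality \<open>\<lceil>(n - 1) b\<rceil> \<le> n b\<close> holds iff \<open>(n - 1) b \<le> \<lfloor>n b\<rfloor>\<close>, i.e. iff \<open>{n b} \<le> b\<close>;
  and \<open>\<lceil>(n - 1) b\<rceil> < (n - 1) b + 1 \<le> n b + 1\<close> gives the upper bound. For (3), the extra
  term \<open>\<lceil>(n - 2) b\<rceil>\<close> in \<open>(n - 1) b\<^sub>n\<^sub>-\<^sub>1\<close> never exceeds \<open>\<lceil>(n - 1) b\<rceil>\<close>, so
  \<open>\<lceil>(n - 1) b\<^sub>n\<^sub>-\<^sub>1\<rceil> = \<lceil>(n - 1) b\<rceil>\<close>, and \<open>\<lfloor>b\<rfloor>\<close> is \<open>0\<close> unless \<open>b = 1\<close>.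
\<close>

lemma mult_bn_eq_max:
  assumes "n > 0"
  shows "real n * bn b n = max (real n * b) (of_int \<lceil>(real n - 1) * b\<rceil>)"
  using assms unfolding bn_def by (simp add: max_mult_distrib_left)

lemma ceiling_le_iff_frac_le:
  fixes x b :: real
  shows "of_int \<lceil>x - b\<rceil> \<le> x \<longleftrightarrow> frac x \<le> b"
proof -
  have "of_int \<lceil>x - b\<rceil> \<le> x \<longleftrightarrow> \<lceil>x - b\<rceil> \<le> \<lfloor>x\<rfloor>"
    by (metis floor_mono floor_of_int le_floor_iff)
  also have "\<dots> \<longleftrightarrow> x - b \<le> of_int \<lfloor>x\<rfloor>"
    by (simp add: ceiling_le_iff)
  finally show ?thesis
    unfolding frac_def by linarith
qed

lemma bn_eq_self_iff_frac_le:
  assumes "n > 0"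
  shows "b = bn b n \<longleftrightarrow> frac (real n * b) \<le> b"
proof -
  have "b = bn b n \<longleftrightarrow> real n * b = real n * bn b n"
    using assms by simp
  also have "\<dots> \<longleftrightarrow> of_int \<lceil>real n * b - b\<rceil> \<le> real n * b"
    using assms by (auto simp: mult_bn_eq_max max_def left_diff_distrib)
  finally show ?thesis
    by (simp add: ceiling_le_iff_frac_le)
qed

lemma self_le_bn: "b \<le> bn b n"
  unfolding bn_def by simp

lemma bn_le_add_inverse:
  assumes "0 \<le> b" "n > 0"
  shows "bn b n \<le> b + 1 / real n"
proof -
  have "of_int \<lceil>(real n - 1) * b\<rceil> \<le> real n * b + 1"
    using assms(1) by (simp add: algebra_simps) linarith
  then have "real n * bn b n \<le> real n * (b + 1 / real n)"
    using assms by (simp add: mult_bn_eq_max algebra_simps)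
  then show ?thesis
    using assms(2) by simp
qed

lemma ceiling_mult_bn:
  assumes "0 \<le> b"
  shows "\<lceil>real n * bn b n\<rceil> = \<lceil>real n * b\<rceil>"
proof (cases "n = 0")
  case False
  have "\<lceil>(real n - 1) * b\<rceil> \<le> \<lceil>real n * b\<rceil>"
    using assms by (intro ceiling_mono) (simp add: algebra_simps)
  then show ?thesis
    using False by (simp add: mult_bn_eq_max max_def) linarith
qed simp

lemma floor_add_ceiling_mult_bn_pred_le:
  assumes "0 \<le> b" "b \<le> 1" "n \<ge> 1"
  shows "of_int \<lfloor>b\<rfloor> + of_int \<lceil>(real n - 1) * bn b (n - 1)\<rceil> \<le> real n * bn b n"
proof -
  have ceiling_pred: "\<lceil>(real n - 1) * bn b (n - 1)\<rceil> = \<lceil>(real n - 1) * b\<rceil>"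
    using ceiling_mult_bn[OF assms(1), of "n - 1"] assms(3) by (simp add: of_nat_diff)
  have mult_bn: "real n * bn b n = max (real n * b) (of_int \<lceil>(real n - 1) * b\<rceil>)"
    using assms(3) by (simp add: mult_bn_eq_max)
  show ?thesis
  proof (cases "b = 1")
    case True
    then have "of_int \<lfloor>b\<rfloor> + of_int \<lceil>(real n - 1) * b\<rceil> = real n * b"
      by simp
    then show ?thesis
      unfolding ceiling_pred mult_bn by linarith
  next
    case False
    then have "\<lfloor>b\<rfloor> = 0"
      using assms(1,2) by (simp add: floor_eq_iff)
    then show ?thesis
      unfolding ceiling_pred mult_bn by simp
  qed
qed

theorem lemma1p1:
  fixes b :: real and n :: nat
  assumes "0 \<le> b" and "b \<le> 1" and "n \<ge> 1"
  shows "(b = bn b n \<longleftrightarrow> frac (real n * b) \<le> b)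
    \<and> (b \<le> bn b n \<and> bn b n \<le> b + 1 / real n)
    \<and> real_of_int \<lfloor>b\<rfloor> + real_of_int \<lceil>(real n - 1) * bn b (n - 1)\<rceil> \<le> real n * bn b n"
proof -
  have "n > 0"
    using assms(3) by simp
  with assms show ?thesis
    by (intro conjI bn_eq_self_iff_frac_le self_le_bn bn_le_add_inverse
        floor_add_ceiling_mult_bn_pred_le)
qed

end
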